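(* Let $\ell:\mathbb{R}^d\times\mathcal{A}\to[0,B]$, let $a_1,\dots,a_n\in\mathcal A$, $f(x)=\frac1n\sum_{i=1}^n\ell(x;a_i)$, and for $\sigma>0$ let $\tilde f(x)=\mathbb{E}_z[f(x+z)]$ with $z\sim N(0,\sigma^2I_{d\times d})$ and $g(x)=\frac{z}{\sigma^2}(\ell(x+z;a)-\ell(x;a))$ with $z\sim N(0,\sigma^2I)$ and $a$ uniform on $\{a_1,\dots,a_n\}$ independent. Then: (1) for any $x\in K$, $\mathbb{E}[g(x)\mid x]=\nabla\tilde f(x)$, and for any $u\in\mathbb{R}^d$ with $\|u\|_2\le\frac{\sigma}{2B}$, $\mathbb{E}[e^{\langle u,g(x)\rangle^2}\mid x]\le e^{\|u\|_2^2(2B/\sigma)^2}$; (2) $\tilde f$ is $(2B/\sigma^2)$-smooth.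
   Context: $K\subset\mathbb{R}^d$ is the (compact) parameter space. A function $h$ is $\lambda$-smooth if $|h(y)-h(x)-\langle y-x,\nabla h(x)\rangle|\le\frac\lambda2\|y-x\|_2^2$ for all $x,y$. *)

theory Defs
  imports "HOL-Probability.Probability"
begin

definition gauss :: "real \<Rightarrow> 'a::euclidean_space measure" where
  "gauss \<sigma> = density lborel
     (\<lambda>z. ennreal ((2 * pi * \<sigma>\<^sup>2) powr (- real DIM('a) / 2) * exp (- (norm z)\<^sup>2 / (2 * \<sigma>\<^sup>2))))"

definition lsmooth :: "real \<Rightarrow> ('a::euclidean_space \<Rightarrow> real) \<Rightarrow> bool" where
  "lsmooth L h \<longleftrightarrow> (\<exists>G. (\<forall>x. (h has_derivative (\<lambda>v. v \<bullet> G x)) (at x)) \<and>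
      (\<forall>x y. \<bar>h y - h x - (y - x) \<bullet> G x\<bar> \<le> L / 2 * (norm (y - x))\<^sup>2))"

end

theory Submission
  imports Defs
begin

text \<open>Gaussian smoothing turns a translation by \<open>h\<close> into multiplication by the Cameron--Martin
  density \<open>e\<^sub>h z = exp (h \<bullet> z / \<sigma>\<^sup>2 - \<bar>h\<bar>\<^sup>2 / (2 \<sigma>\<^sup>2))\<close>: the smoothed function satisfies
  \<open>F (x + h) = E[f (x + z) e\<^sub>h z]\<close>. The remainder \<open>\<rho> = e\<^sub>h - 1 - h \<bullet> z / \<sigma>\<^sup>2\<close> has mean zero and,
  by convexity of \<open>exp\<close>, is bounded below by \<open>-\<bar>h\<bar>\<^sup>2 / (2 \<sigma>\<^sup>2)\<close>; hence for \<open>0 \<le> f \<le> B\<close> the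
  first-order Taylor remainder \<open>E[f \<rho>]\<close> of \<open>F\<close> is at most \<open>B \<bar>h\<bar>\<^sup>2 / (2 \<sigma>\<^sup>2)\<close> in absolute value.
  This gives both differentiability, with gradient \<open>E[f (x + z) z] / \<sigma>\<^sup>2\<close> (the mean of the
  estimator \<open>g\<close>, since \<open>E z = 0\<close>), and smoothness.

  For the exponential moment, the scalar factor of \<open>z\<close> in \<open>g\<close> is bounded by \<open>B / \<sigma>\<^sup>2\<close>, so it
  suffices to compute \<open>E exp (c (u \<bullet> z)\<^sup>2) = 1 / sqrt (1 - 2 c \<sigma>\<^sup>2 \<bar>u\<bar>\<^sup>2)\<close>: writing
  \<open>exp (c t\<^sup>2)\<close> as a moment generating function of a standard normal variable
  (Hubbard--Stratonovich) and using Fubini reduces it to the moment generating function of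
  \<open>u \<bullet> z\<close>.\<close>

definition gauss_density :: "real \<Rightarrow> 'a::euclidean_space \<Rightarrow> real" where
  "gauss_density \<sigma> z =
     (2 * pi * \<sigma>\<^sup>2) powr (- real DIM('a) / 2) * exp (- (norm z)\<^sup>2 / (2 * \<sigma>\<^sup>2))"

lemma gauss_eq_density: "gauss \<sigma> = density lborel (\<lambda>z. ennreal (gauss_density \<sigma> z))"
  unfolding gauss_def gauss_density_def ..

lemma sets_gauss [simp, measurable_cong]: "sets (gauss \<sigma>) = sets borel"
  by (simp add: gauss_def)

lemma space_gauss [simp]: "space (gauss \<sigma>) = UNIV"
  by (simp add: gauss_def)

lemma gauss_density_pos: "\<sigma> > 0 \<Longrightarrow> gauss_density \<sigma> z > 0"
  by (simp add: gauss_density_def)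

lemma borel_measurable_gauss_density [measurable]: "gauss_density \<sigma> \<in> borel_measurable borel"
  unfolding gauss_density_def by measurable

lemma gauss_density_eq_prod_normal_density:
  assumes "\<sigma> > 0"
  shows "gauss_density \<sigma> (z::'a::euclidean_space) = (\<Prod>b\<in>Basis. normal_density 0 \<sigma> (z \<bullet> b))"
proof -
  have c: "2 * pi * \<sigma>\<^sup>2 > 0"
    using assms by simp
  have "(\<Prod>b\<in>(Basis::'a set). 1 / sqrt (2 * pi * \<sigma>\<^sup>2)) = ((2 * pi * \<sigma>\<^sup>2) powr (- 1 / 2)) ^ DIM('a)"
    using c by (simp add: powr_minus_divide powr_half_sqrt)
  also have "\<dots> = (2 * pi * \<sigma>\<^sup>2) powr (- real DIM('a) / 2)"
    using c by (subst powr_power) auto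
  finally have const: "(\<Prod>b\<in>(Basis::'a set). 1 / sqrt (2 * pi * \<sigma>\<^sup>2)) = \<dots>" .
  have "(norm z)\<^sup>2 = (\<Sum>b\<in>Basis. (z \<bullet> b)\<^sup>2)"
    unfolding power2_norm_eq_inner euclidean_inner[of z z] by (simp add: power2_eq_square)
  then have "(\<Prod>b\<in>Basis. exp (- (z \<bullet> b)\<^sup>2 / (2 * \<sigma>\<^sup>2))) = exp (- (norm z)\<^sup>2 / (2 * \<sigma>\<^sup>2))"
    by (simp add: exp_sum[symmetric] sum_divide_distrib sum_negf)
  moreover have "(\<Prod>b\<in>Basis. normal_density 0 \<sigma> (z \<bullet> b)) =
      (\<Prod>b\<in>(Basis::'a set). 1 / sqrt (2 * pi * \<sigma>\<^sup>2)) * (\<Prod>b\<in>Basis. exp (- (z \<bullet> b)\<^sup>2 / (2 * \<sigma>\<^sup>2)))"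
    by (simp only: normal_density_def diff_zero prod.distrib)
  ultimately show ?thesis
    using const by (simp add: gauss_density_def)
qed

lemma prob_space_gauss:
  assumes "\<sigma> > 0"
  shows "prob_space (gauss \<sigma> :: 'a::euclidean_space measure)"
proof
  have "(\<integral>\<^sup>+z. ennreal (gauss_density \<sigma> (z::'a)) \<partial>lborel) =
      (\<integral>\<^sup>+z. (\<Prod>b\<in>(Basis::'a set). ennreal (normal_density 0 \<sigma> (z \<bullet> b))) \<partial>lborel)"
    using assms by (simp add: gauss_density_eq_prod_normal_density prod_ennreal)
  also have "\<dots> = (\<Prod>b\<in>(Basis::'a set). \<integral>\<^sup>+t. ennreal (normal_density 0 \<sigma> t) \<partial>lborel)"
    by (rule nn_integral_lborel_prod) auto
  also have "\<dots> = 1"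
    using assms by (simp add: nn_integral_eq_integral)
  finally show "emeasure (gauss \<sigma> :: 'a measure) (space (gauss \<sigma>)) = 1"
    by (simp add: gauss_eq_density emeasure_density)
qed

definition gauss_shift_density :: "real \<Rightarrow> 'a::euclidean_space \<Rightarrow> 'a \<Rightarrow> real" where
  "gauss_shift_density \<sigma> h z = exp (h \<bullet> z / \<sigma>\<^sup>2 - (norm h)\<^sup>2 / (2 * \<sigma>\<^sup>2))"

lemma borel_measurable_gauss_shift_density [measurable]:
  "gauss_shift_density \<sigma> h \<in> borel_measurable borel"
  unfolding gauss_shift_density_def by measurable

lemma gauss_shift_density_pos: "gauss_shift_density \<sigma> h z > 0"
  by (simp add: gauss_shift_density_def)

lemma gauss_density_diff:
  assumes "\<sigma> > 0"
  shows "gauss_density \<sigma> (w - h) = gauss_density \<sigma> w * gauss_shift_density \<sigma> h w"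
proof -
  have norm_diff: "(norm (w - h))\<^sup>2 = (norm w)\<^sup>2 - 2 * (h \<bullet> w) + (norm h)\<^sup>2"
    by (simp add: power2_norm_eq_inner inner_diff_left inner_diff_right inner_commute)
  have "- (norm (w - h))\<^sup>2 / (2 * \<sigma>\<^sup>2) =
      - (norm w)\<^sup>2 / (2 * \<sigma>\<^sup>2) + (h \<bullet> w / \<sigma>\<^sup>2 - (norm h)\<^sup>2 / (2 * \<sigma>\<^sup>2))"
    using assms unfolding norm_diff by (simp add: field_simps)
  then show ?thesis
    unfolding gauss_density_def gauss_shift_density_def by (simp only: exp_add mult.assoc)
qed

lemma distr_gauss_plus:
  assumes "\<sigma> > 0"
  shows "distr (gauss \<sigma>) borel ((+) h) = density (gauss \<sigma>) (\<lambda>z. ennreal (gauss_shift_density \<sigma> h z))"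
proof -
  have "distr (gauss \<sigma>) borel ((+) h) =
      distr (density (distr lborel borel ((+) (- h))) (\<lambda>z. ennreal (gauss_density \<sigma> z))) lborel ((+) h)"
    by (intro distr_cong) (simp_all add: gauss_eq_density lborel_distr_plus)
  also have "\<dots> = density lborel (\<lambda>w. ennreal (gauss_density \<sigma> (w - h)))"
    by (subst distr_density_distr) (auto simp: comp_def)
  also have "\<dots> = density lborel (\<lambda>w. ennreal (gauss_density \<sigma> w) * ennreal (gauss_shift_density \<sigma> h w))"
    using assms by (simp add: gauss_density_diff ennreal_mult' gauss_density_pos less_imp_le)
  also have "\<dots> = density (gauss \<sigma>) (\<lambda>z. ennreal (gauss_shift_density \<sigma> h z))"
    by (simp add: gauss_eq_density density_density_eq)
  finally show ?thesis .
qed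

lemma distr_gauss_uminus: "distr (gauss \<sigma>) borel uminus = gauss \<sigma>"
proof -
  have "distr lborel borel uminus = (lborel :: 'a::euclidean_space measure)"
    by (subst lborel_affine[of "-1" 0]) (auto simp: density_1 one_ennreal_def[symmetric])
  then have "distr (gauss \<sigma>) borel uminus =
      distr (density (distr lborel borel uminus) (\<lambda>z. ennreal (gauss_density \<sigma> z))) lborel (uminus :: 'a \<Rightarrow> 'a)"
    by (intro distr_cong) (simp_all add: gauss_eq_density)
  also have "\<dots> = gauss \<sigma>"
    by (subst distr_density_distr) (auto simp: comp_def gauss_eq_density gauss_density_def)
  finally show ?thesis .
qed

lemma integral_gauss_plus:
  fixes F :: "'a::euclidean_space \<Rightarrow> 'b::{banach, second_countable_topology}"
  assumes "\<sigma> > 0" and [measurable]: "F \<in> borel_measurable borel"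
  shows "(\<integral>z. F (h + z) \<partial>gauss \<sigma>) = (\<integral>z. gauss_shift_density \<sigma> h z *\<^sub>R F z \<partial>gauss \<sigma>)"
proof -
  have "(\<integral>z. F (h + z) \<partial>gauss \<sigma>) = (\<integral>z. F z \<partial>distr (gauss \<sigma>) borel ((+) h))"
    by (simp add: integral_distr)
  then show ?thesis
    using assms by (simp add: distr_gauss_plus integral_density less_imp_le gauss_shift_density_pos)
qed

lemma integral_gauss_uminus:
  fixes F :: "'a::euclidean_space \<Rightarrow> 'b::{banach, second_countable_topology}"
  assumes [measurable]: "F \<in> borel_measurable borel"
  shows "(\<integral>z. F (- z) \<partial>gauss \<sigma>) = (\<integral>z. F z \<partial>gauss \<sigma>)"
  by (subst (2) distr_gauss_uminus[symmetric]) (simp add: integral_distr)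

lemma nn_integral_gauss_shift_density:
  assumes "\<sigma> > 0"
  shows "(\<integral>\<^sup>+z. ennreal (gauss_shift_density \<sigma> h z) \<partial>gauss \<sigma>) = 1"
proof -
  interpret prob_space "gauss \<sigma> :: 'a measure"
    using assms by (rule prob_space_gauss)
  have "(\<integral>\<^sup>+z. ennreal (gauss_shift_density \<sigma> h z) \<partial>gauss \<sigma>) =
      emeasure (distr (gauss \<sigma>) borel ((+) h)) UNIV"
    using assms by (simp add: distr_gauss_plus emeasure_density)
  also have "\<dots> = 1"
    by (simp add: emeasure_distr emeasure_space_1[simplified])
  finally show ?thesis .
qed

lemma integrable_gauss_shift_density:
  assumes "\<sigma> > 0"
  shows "integrable (gauss \<sigma>) (gauss_shift_density \<sigma> h)"
  using nn_integral_gauss_shift_density[OF assms, of h]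
  by (intro integrableI_nonneg) (auto simp: less_imp_le gauss_shift_density_pos)

lemma integral_gauss_shift_density:
  assumes "\<sigma> > 0"
  shows "(\<integral>z. gauss_shift_density \<sigma> h z \<partial>gauss \<sigma>) = 1"
  using nn_integral_gauss_shift_density[OF assms, of h] integrable_gauss_shift_density[OF assms, of h]
  by (subst (asm) nn_integral_eq_integral) (auto simp: less_imp_le gauss_shift_density_pos)

lemma integrable_bounded_scaleR:
  fixes F :: "'a \<Rightarrow> real" and g :: "'a \<Rightarrow> 'b::{banach, second_countable_topology}"
  assumes "integrable M g" "F \<in> borel_measurable M" "\<And>x. x \<in> space M \<Longrightarrow> \<bar>F x\<bar> \<le> B"
  shows "integrable M (\<lambda>x. F x *\<^sub>R g x)"
proof (rule Bochner_Integration.integrable_bound)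
  show "integrable M (\<lambda>x. B * norm (g x))"
    using assms(1) by auto
  show "AE x in M. norm (F x *\<^sub>R g x) \<le> norm (B * norm (g x))"
  proof (intro AE_I2)
    fix x assume "x \<in> space M"
    then have "\<bar>F x\<bar> * norm (g x) \<le> B * norm (g x)"
      using assms(3) by (intro mult_right_mono) auto
    then show "norm (F x *\<^sub>R g x) \<le> norm (B * norm (g x))"
      by (simp add: order_trans[OF _ abs_ge_self])
  qed
qed (use assms in measurable)

lemma (in prob_space) abs_integral_mult_le_of_mean_zero:
  fixes F \<rho> :: "'a \<Rightarrow> real"
  assumes \<rho>: "integrable M \<rho>" "expectation \<rho> = 0" "\<And>x. x \<in> space M \<Longrightarrow> - c \<le> \<rho> x"
    and F: "F \<in> borel_measurable M" "\<And>x. x \<in> space M \<Longrightarrow> 0 \<le> F x \<and> F x \<le> B"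
  shows "\<bar>\<integral>x. F x * \<rho> x \<partial>M\<bar> \<le> B * c"
proof -
  have "- c \<le> expectation \<rho>"
    using \<rho> by (intro integral_ge_const) auto
  then have c: "0 \<le> c"
    using \<rho>(2) by simp
  have int_F\<rho>: "integrable M (\<lambda>x. F x * \<rho> x)"
    using integrable_bounded_scaleR[OF \<rho>(1) F(1), of B] F(2) by force
  have lower: "- (B * c) \<le> F x * \<rho> x" and upper: "(F x - B) * \<rho> x \<le> B * c"
    if "x \<in> space M" for x
  proof -
    have "F x * - c \<le> F x * \<rho> x" "(F x - B) * \<rho> x \<le> (F x - B) * - c" "F x * c \<le> B * c"
      using F(2)[OF that] \<rho>(3)[OF that] c
      by (intro mult_left_mono mult_left_mono_neg mult_right_mono; simp)+
    moreover have "0 \<le> F x * c"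
      using F(2)[OF that] c by simp
    ultimately show "- (B * c) \<le> F x * \<rho> x" "(F x - B) * \<rho> x \<le> B * c"
      by (auto simp: algebra_simps)
  qed
  have "(\<integral>x. F x * \<rho> x \<partial>M) = (\<integral>x. (F x - B) * \<rho> x \<partial>M)"
    using int_F\<rho> \<rho>(1,2) by (simp add: left_diff_distrib)
  also have "\<dots> \<le> B * c"
    using int_F\<rho> \<rho>(1) upper by (intro integral_le_const) (auto simp: left_diff_distrib)
  finally show ?thesis
    using lower int_F\<rho> integral_ge_const[of "\<lambda>x. F x * \<rho> x" "- (B * c)"] by auto
qed

lemma nn_integral_gauss_exp_inner:
  assumes "\<sigma> > 0"
  shows "(\<integral>\<^sup>+z. ennreal (exp (v \<bullet> z)) \<partial>gauss \<sigma>) = ennreal (exp (\<sigma>\<^sup>2 * (norm v)\<^sup>2 / 2))"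
proof -
  have "exp (v \<bullet> z) = gauss_shift_density \<sigma> (\<sigma>\<^sup>2 *\<^sub>R v) z * exp (\<sigma>\<^sup>2 * (norm v)\<^sup>2 / 2)" for z
  proof -
    have "v \<bullet> z = (\<sigma>\<^sup>2 *\<^sub>R v) \<bullet> z / \<sigma>\<^sup>2 - (norm (\<sigma>\<^sup>2 *\<^sub>R v))\<^sup>2 / (2 * \<sigma>\<^sup>2) + \<sigma>\<^sup>2 * (norm v)\<^sup>2 / 2"
      using assms by (simp add: power2_eq_square field_simps)
    then show ?thesis
      unfolding gauss_shift_density_def by (simp add: exp_add[symmetric])
  qed
  then have "(\<integral>\<^sup>+z. ennreal (exp (v \<bullet> z)) \<partial>gauss \<sigma>) =
      (\<integral>\<^sup>+z. ennreal (gauss_shift_density \<sigma> (\<sigma>\<^sup>2 *\<^sub>R v) z) * ennreal (exp (\<sigma>\<^sup>2 * (norm v)\<^sup>2 / 2)) \<partial>gauss \<sigma>)"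
    by (simp add: ennreal_mult' gauss_shift_density_pos less_imp_le)
  also have "\<dots> = ennreal (exp (\<sigma>\<^sup>2 * (norm v)\<^sup>2 / 2))"
    using assms by (simp add: nn_integral_multc nn_integral_gauss_shift_density)
  finally show ?thesis .
qed

lemma integrable_gauss_exp_inner: "\<sigma> > 0 \<Longrightarrow> integrable (gauss \<sigma>) (\<lambda>z. exp (v \<bullet> z))"
  using nn_integral_gauss_exp_inner[of \<sigma> v] by (intro integrableI_nonneg) auto

lemma integrable_gauss_inner:
  assumes "\<sigma> > 0"
  shows "integrable (gauss \<sigma>) (\<lambda>z. v \<bullet> z)"
proof (rule Bochner_Integration.integrable_bound)
  show "integrable (gauss \<sigma>) (\<lambda>z. exp (v \<bullet> z) + exp ((- v) \<bullet> z))"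
    using assms by (intro Bochner_Integration.integrable_add integrable_gauss_exp_inner)
  have "\<bar>t\<bar> \<le> exp t + exp (- t)" for t :: real
    unfolding abs_le_iff
    using exp_ge_add_one_self[of t] exp_ge_add_one_self[of "- t"] exp_gt_zero[of t] exp_gt_zero[of "- t"]
    by linarith
  then show "AE z in gauss \<sigma>. norm (v \<bullet> z) \<le> norm (exp (v \<bullet> z) + exp ((- v) \<bullet> z))"
    by (intro AE_I2) (simp add: add_pos_pos)
qed simp

lemma integral_gauss_inner: "(\<integral>z. v \<bullet> z \<partial>gauss \<sigma>) = 0"
  using integral_gauss_uminus[of "\<lambda>z. v \<bullet> z" \<sigma>] by simp

lemma integrable_gauss_norm:
  assumes "\<sigma> > 0"
  shows "integrable (gauss \<sigma>) (\<lambda>z::'a::euclidean_space. norm z)"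
proof (rule Bochner_Integration.integrable_bound)
  show "integrable (gauss \<sigma>) (\<lambda>z::'a. \<Sum>b\<in>Basis. \<bar>b \<bullet> z\<bar>)"
    using assms by (intro Bochner_Integration.integrable_sum integrable_abs integrable_gauss_inner)
  show "AE z in gauss \<sigma>. norm (norm z) \<le> norm (\<Sum>b\<in>Basis. \<bar>b \<bullet> z\<bar>)"
    by (intro AE_I2) (simp add: norm_le_l1 sum_nonneg inner_commute)
qed simp

lemma integrable_gauss_id: "\<sigma> > 0 \<Longrightarrow> integrable (gauss \<sigma>) (\<lambda>z::'a::euclidean_space. z)"
  by (subst integrable_norm_iff[symmetric]) (simp_all add: integrable_gauss_norm)

lemma integrable_gauss_scaleR:
  fixes \<phi> :: "'a::euclidean_space \<Rightarrow> real"
  assumes "\<sigma> > 0" "\<phi> \<in> borel_measurable borel" "\<And>z. \<bar>\<phi> z\<bar> \<le> M"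
  shows "integrable (gauss \<sigma>) (\<lambda>z. \<phi> z *\<^sub>R z)"
proof (rule integrable_bounded_scaleR)
  show "integrable (gauss \<sigma>) (\<lambda>z. z)"
    using assms(1) by (rule integrable_gauss_id)
qed (use assms(2,3) in auto)

lemma integral_gauss_id: "(\<integral>z. z \<partial>gauss \<sigma>) = 0"
  using integral_gauss_uminus[of uminus \<sigma>] by (simp add: eq_neg_iff_add_eq_0 scaleR_2[symmetric])

lemma gauss_smoothing_remainder:
  fixes F :: "'a::euclidean_space \<Rightarrow> real"
  assumes \<sigma>: "\<sigma> > 0" and [measurable]: "F \<in> borel_measurable borel"
    and F: "\<And>z. 0 \<le> F z \<and> F z \<le> B"
  shows "\<bar>(\<integral>z. F (h + z) \<partial>gauss \<sigma>) - (\<integral>z. F z \<partial>gauss \<sigma>) - h \<bullet> (\<integral>z. F z *\<^sub>R z \<partial>gauss \<sigma>) / \<sigma>\<^sup>2\<bar>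
    \<le> B / \<sigma>\<^sup>2 / 2 * (norm h)\<^sup>2"
proof -
  interpret prob_space "gauss \<sigma> :: 'a measure"
    using \<sigma> by (rule prob_space_gauss)
  let ?e = "gauss_shift_density \<sigma> h"
  define \<rho> where "\<rho> = (\<lambda>z. ?e z - 1 - h \<bullet> z / \<sigma>\<^sup>2)"
  have F_abs: "\<bar>F z\<bar> \<le> B" for z
    using F[of z] by simp
  have int_e: "integrable (gauss \<sigma>) ?e"
    using \<sigma> by (rule integrable_gauss_shift_density)
  have int_inner: "integrable (gauss \<sigma>) (\<lambda>z. h \<bullet> z)"
    using \<sigma> by (rule integrable_gauss_inner)
  have int_\<rho>: "integrable (gauss \<sigma>) \<rho>" and mean_\<rho>: "expectation \<rho> = 0"
    using \<sigma> int_e int_inner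
    by (simp_all add: \<rho>_def integral_gauss_shift_density integral_gauss_inner prob_space[simplified])
  have \<rho>_lower: "- ((norm h)\<^sup>2 / (2 * \<sigma>\<^sup>2)) \<le> \<rho> z" for z
    unfolding \<rho>_def gauss_shift_density_def
    using exp_ge_add_one_self[of "h \<bullet> z / \<sigma>\<^sup>2 - (norm h)\<^sup>2 / (2 * \<sigma>\<^sup>2)"] by linarith
  have int_Fe: "integrable (gauss \<sigma>) (\<lambda>z. F z * ?e z)"
    using integrable_bounded_scaleR[OF int_e, of F B] F_abs by simp
  have int_Fh: "integrable (gauss \<sigma>) (\<lambda>z. F z * (h \<bullet> z))"
    using integrable_bounded_scaleR[OF int_inner, of F B] F_abs by simp
  have int_F: "integrable (gauss \<sigma>) F"
    using F_abs by (intro integrable_const_bound[of _ B]) auto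
  have int_Fz: "integrable (gauss \<sigma>) (\<lambda>z. F z *\<^sub>R z)"
    by (rule integrable_gauss_scaleR[OF \<sigma> _ F_abs]) measurable
  have "(\<integral>z. F (h + z) \<partial>gauss \<sigma>) - (\<integral>z. F z \<partial>gauss \<sigma>) - h \<bullet> (\<integral>z. F z *\<^sub>R z \<partial>gauss \<sigma>) / \<sigma>\<^sup>2 =
      (\<integral>z. F z * ?e z - F z - F z * (h \<bullet> z) / \<sigma>\<^sup>2 \<partial>gauss \<sigma>)"
    using \<sigma> int_Fe int_F int_Fh int_Fz
    by (simp add: integral_gauss_plus integral_inner_right[symmetric] mult.commute)
  also have "\<dots> = (\<integral>z. F z * \<rho> z \<partial>gauss \<sigma>)"
    by (simp add: \<rho>_def algebra_simps)
  finally have remainder: "(\<integral>z. F (h + z) \<partial>gauss \<sigma>) - (\<integral>z. F z \<partial>gauss \<sigma>)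
      - h \<bullet> (\<integral>z. F z *\<^sub>R z \<partial>gauss \<sigma>) / \<sigma>\<^sup>2 = (\<integral>z. F z * \<rho> z \<partial>gauss \<sigma>)" .
  have "\<bar>\<integral>z. F z * \<rho> z \<partial>gauss \<sigma>\<bar> \<le> B * ((norm h)\<^sup>2 / (2 * \<sigma>\<^sup>2))"
    by (rule abs_integral_mult_le_of_mean_zero[OF int_\<rho> mean_\<rho> \<rho>_lower]) (use F in auto)
  then show ?thesis
    unfolding remainder by (simp add: field_simps)
qed

lemma gauss_smoothing_taylor:
  fixes F :: "'a::euclidean_space \<Rightarrow> real"
  assumes "\<sigma> > 0" and [measurable]: "F \<in> borel_measurable borel"
    and "\<And>z. 0 \<le> F z \<and> F z \<le> B"
  shows "\<bar>(\<integral>z. F (y + z) \<partial>gauss \<sigma>) - (\<integral>z. F (x + z) \<partial>gauss \<sigma>)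
      - (y - x) \<bullet> ((\<integral>z. F (x + z) *\<^sub>R z \<partial>gauss \<sigma>) /\<^sub>R \<sigma>\<^sup>2)\<bar> \<le> B / \<sigma>\<^sup>2 / 2 * (norm (y - x))\<^sup>2"
proof -
  have "x + ((y - x) + z) = y + z" for z
    by simp
  moreover have "(y - x) \<bullet> (v /\<^sub>R \<sigma>\<^sup>2) = (y - x) \<bullet> v / \<sigma>\<^sup>2" for v :: 'a
    by (simp add: divide_inverse_commute)
  ultimately show ?thesis
    using gauss_smoothing_remainder[OF assms(1), of "\<lambda>z. F (x + z)" B "y - x"] assms(3) by simp
qed

lemma has_derivative_of_quadratic_remainder:
  fixes h :: "'a::real_inner \<Rightarrow> real"
  assumes "\<And>y. \<bar>h y - h x - (y - x) \<bullet> G\<bar> \<le> C * (norm (y - x))\<^sup>2"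
  shows "(h has_derivative (\<lambda>v. v \<bullet> G)) (at x)"
  unfolding has_derivative_at_alt
proof (intro conjI allI impI bounded_linear_inner_left)
  fix e :: real assume "e > 0"
  show "\<exists>d>0. \<forall>y. norm (y - x) < d \<longrightarrow> norm (h y - h x - (y - x) \<bullet> G) \<le> e * norm (y - x)"
  proof (intro exI[of _ "e / (\<bar>C\<bar> + 1)"] conjI allI impI)
    show "e / (\<bar>C\<bar> + 1) > 0"
      using \<open>e > 0\<close> by simp
    fix y assume y: "norm (y - x) < e / (\<bar>C\<bar> + 1)"
    have "C * norm (y - x) \<le> (\<bar>C\<bar> + 1) * norm (y - x)"
      by (intro mult_right_mono) auto
    also have "\<dots> \<le> e"
      using y by (simp add: field_simps)
    finally have "C * norm (y - x) * norm (y - x) \<le> e * norm (y - x)"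
      by (intro mult_right_mono) auto
    then show "norm (h y - h x - (y - x) \<bullet> G) \<le> e * norm (y - x)"
      using assms[of y] by (simp add: power2_eq_square mult.assoc)
  qed
qed

lemma nn_integral_exp_mult_std_normal:
  "(\<integral>\<^sup>+y. ennreal (exp (a * y) * std_normal_density y) \<partial>lborel) = ennreal (exp (a\<^sup>2 / 2))"
proof -
  have "(\<integral>\<^sup>+y. ennreal (exp (a * y) * std_normal_density y) \<partial>lborel) =
        (\<integral>\<^sup>+y. ennreal (normal_density a 1 y) * ennreal (exp (a\<^sup>2 / 2)) \<partial>lborel)"
  proof (intro nn_integral_cong)
    fix y :: real
    have square: "- (y - a)\<^sup>2 / 2 + a\<^sup>2 / 2 = a * y + - y\<^sup>2 / 2"
      by (simp add: power2_eq_square field_simps)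
    have "normal_density a 1 y * exp (a\<^sup>2 / 2) = 1 / sqrt (2 * pi) * exp (- (y - a)\<^sup>2 / 2 + a\<^sup>2 / 2)"
      unfolding normal_density_def exp_add by simp
    also have "\<dots> = exp (a * y) * std_normal_density y"
      unfolding square std_normal_density_def exp_add by simp
    finally have "exp (a * y) * std_normal_density y = normal_density a 1 y * exp (a\<^sup>2 / 2)"
      by simp
    then show "ennreal (exp (a * y) * std_normal_density y) = ennreal (normal_density a 1 y) * ennreal (exp (a\<^sup>2 / 2))"
      by (simp add: ennreal_mult')
  qed
  also have "\<dots> = ennreal (exp (a\<^sup>2 / 2))"
    by (subst nn_integral_multc) (auto simp: nn_integral_eq_integral)
  finally show ?thesis .
qed

lemma nn_integral_exp_square_std_normal:
  assumes k: "0 \<le> k" "k < 1/2"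
  shows "(\<integral>\<^sup>+y. ennreal (exp (k * y\<^sup>2) * std_normal_density y) \<partial>lborel) = ennreal (1 / sqrt (1 - 2 * k))"
proof -
  define s where "s = 1 / sqrt (1 - 2 * k)"
  have q: "1 - 2 * k > 0"
    using k by simp
  have s0: "s > 0"
    unfolding s_def using q by simp
  have "(\<integral>\<^sup>+y. ennreal (exp (k * y\<^sup>2) * std_normal_density y) \<partial>lborel) =
        (\<integral>\<^sup>+y. ennreal (normal_density 0 s y) * ennreal (1 / sqrt (1 - 2 * k)) \<partial>lborel)"
  proof (intro nn_integral_cong)
    fix y :: real
    have ss: "s\<^sup>2 = 1 / (1 - 2 * k)"
      unfolding s_def using q by (simp add: power_divide)
    have "normal_density 0 s y = 1 / sqrt (2 * pi) * sqrt (1 - 2 * k) * exp (- (1 - 2 * k) * y\<^sup>2 / 2)"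
      unfolding normal_density_def ss using q
      by (simp add: real_sqrt_divide real_sqrt_mult field_simps)
    then have "exp (k * y\<^sup>2) * std_normal_density y = normal_density 0 s y * (1 / sqrt (1 - 2 * k))"
      unfolding std_normal_density_def using q
      by (simp add: mult_exp_exp field_simps)
    then show "ennreal (exp (k * y\<^sup>2) * std_normal_density y) =
        ennreal (normal_density 0 s y) * ennreal (1 / sqrt (1 - 2 * k))"
      using q by (subst ennreal_mult'[symmetric]) simp_all
  qed
  also have "\<dots> = ennreal (1 / sqrt (1 - 2 * k))"
    by (subst nn_integral_multc) (auto simp: nn_integral_eq_integral s0)
  finally show ?thesis .
qed

lemma inverse_sqrt_one_minus_le_exp:
  assumes k: "0 \<le> k" "k \<le> 1/4"
  shows "1 / sqrt (1 - 2 * k) \<le> exp (4 * k)"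
proof -
  have q: "1 - 2 * k > 0"
    using k by simp
  have l: "- (2 * k) - 2 * (2 * k)\<^sup>2 \<le> ln (1 - 2 * k)"
    using k by (intro ln_one_minus_pos_lower_bound) auto
  have "sqrt (1 - 2 * k) = exp (ln (1 - 2 * k) / 2)"
    using q by (simp add: powr_half_sqrt[symmetric] powr_def)
  also have "exp (ln (1 - 2 * k) / 2) \<ge> exp (- (4 * k))"
  proof -
    have "k * k \<le> k * (1/4)"
      using k by (intro mult_left_mono) auto
    then have "ln (1 - 2 * k) \<ge> - (8 * k)"
      using l k by (simp add: power2_eq_square)
    then show ?thesis
      by simp
  qed
  finally have "sqrt (1 - 2 * k) \<ge> exp (- (4 * k))" .
  then have "1 / sqrt (1 - 2 * k) \<le> 1 / exp (- (4 * k))"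
    using q by (intro divide_left_mono) auto
  then show ?thesis
    by (simp add: exp_minus divide_inverse)
qed

text \<open>Hubbard--Stratonovich: \<open>exp (c t\<^sup>2)\<close> is the moment generating function of
  \<open>sqrt (2 c) Y\<close> at \<open>t\<close>, for \<open>Y\<close> standard normal.\<close>

lemma nn_integral_gauss_exp_square_inner:
  fixes v :: "'a::euclidean_space"
  assumes s: "\<sigma> > 0" and c: "c \<ge> 0" and k: "2 * (c * \<sigma>\<^sup>2 * (norm v)\<^sup>2) < 1"
  shows "(\<integral>\<^sup>+z. ennreal (exp (c * (v \<bullet> z)\<^sup>2)) \<partial>gauss \<sigma>) = ennreal (1 / sqrt (1 - 2 * (c * \<sigma>\<^sup>2 * (norm v)\<^sup>2)))"
proof -
  interpret G: prob_space "gauss \<sigma> :: 'a measure"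
    by (rule prob_space_gauss[OF s])
  interpret P: pair_sigma_finite "gauss \<sigma> :: 'a measure" "lborel :: real measure"
    by (simp add: pair_sigma_finite_def G.sigma_finite_measure_axioms lborel.sigma_finite_measure_axioms)
  define r where "r = sqrt (2 * c)"
  have r2: "r\<^sup>2 = 2 * c"
    unfolding r_def using c by simp
  have exp_square: "ennreal (exp (c * t\<^sup>2)) = (\<integral>\<^sup>+y. ennreal (exp ((r * t) * y) * std_normal_density y) \<partial>lborel)" for t
  proof -
    have "(r * t)\<^sup>2 / 2 = c * t\<^sup>2"
      by (simp add: power_mult_distrib r2)
    then show ?thesis
      using nn_integral_exp_mult_std_normal[of "r * t"] by simp
  qed
  have "(\<integral>\<^sup>+z. ennreal (exp (c * (v \<bullet> z)\<^sup>2)) \<partial>gauss \<sigma>) =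
      (\<integral>\<^sup>+z. (\<integral>\<^sup>+y. ennreal (exp ((r * (v \<bullet> z)) * y) * std_normal_density y) \<partial>lborel) \<partial>gauss \<sigma>)"
    by (simp add: exp_square)
  also have "\<dots> = (\<integral>\<^sup>+y. (\<integral>\<^sup>+z. ennreal (exp ((r * (v \<bullet> z)) * y) * std_normal_density y) \<partial>gauss \<sigma>) \<partial>lborel)"
    by (rule P.Fubini'[symmetric]) measurable
  also have "\<dots> = (\<integral>\<^sup>+y. (\<integral>\<^sup>+z. ennreal (exp (((r * y) *\<^sub>R v) \<bullet> z)) * ennreal (std_normal_density y) \<partial>gauss \<sigma>) \<partial>lborel)"
    by (intro nn_integral_cong) (simp add: ennreal_mult' mult_ac)
  also have "\<dots> = (\<integral>\<^sup>+y. ennreal (exp ((c * \<sigma>\<^sup>2 * (norm v)\<^sup>2) * y\<^sup>2) * std_normal_density y) \<partial>lborel)"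
  proof (intro nn_integral_cong)
    fix y :: real
    have "\<sigma>\<^sup>2 * (norm ((r * y) *\<^sub>R v))\<^sup>2 / 2 = (c * \<sigma>\<^sup>2 * (norm v)\<^sup>2) * y\<^sup>2"
      by (simp add: power_mult_distrib r2)
    then have "(\<integral>\<^sup>+z. ennreal (exp (((r * y) *\<^sub>R v) \<bullet> z)) \<partial>gauss \<sigma>) = ennreal (exp ((c * \<sigma>\<^sup>2 * (norm v)\<^sup>2) * y\<^sup>2))"
      using nn_integral_gauss_exp_inner[OF s, of "(r * y) *\<^sub>R v"] by simp
    then show "(\<integral>\<^sup>+z. ennreal (exp (((r * y) *\<^sub>R v) \<bullet> z)) * ennreal (std_normal_density y) \<partial>gauss \<sigma>) =
        ennreal (exp ((c * \<sigma>\<^sup>2 * (norm v)\<^sup>2) * y\<^sup>2) * std_normal_density y)"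
      by (simp add: nn_integral_multc ennreal_mult')
  qed
  also have "\<dots> = ennreal (1 / sqrt (1 - 2 * (c * \<sigma>\<^sup>2 * (norm v)\<^sup>2)))"
    using k c by (intro nn_integral_exp_square_std_normal) auto
  finally show ?thesis .
qed

lemma nn_integral_gauss_exp_square_scaled_le:
  fixes u :: "'a::euclidean_space" and r :: "'a \<Rightarrow> real"
  assumes \<sigma>: "\<sigma> > 0" and r: "\<And>z. \<bar>r z\<bar> \<le> R" and small: "2 * R * \<sigma> * norm u \<le> 1"
  shows "(\<integral>\<^sup>+z. ennreal (exp ((u \<bullet> (r z *\<^sub>R z))\<^sup>2)) \<partial>gauss \<sigma>) \<le> ennreal (exp (4 * (R\<^sup>2 * \<sigma>\<^sup>2 * (norm u)\<^sup>2)))"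
proof -
  have R: "0 \<le> R"
    using r[of 0] by simp
  have k: "R\<^sup>2 * \<sigma>\<^sup>2 * (norm u)\<^sup>2 \<le> 1 / 4"
  proof -
    have "(2 * R * \<sigma> * norm u)\<^sup>2 \<le> 1"
      using small R \<sigma> by (simp add: power_le_one)
    then show ?thesis
      by (simp add: power_mult_distrib)
  qed
  have "(\<integral>\<^sup>+z. ennreal (exp ((u \<bullet> (r z *\<^sub>R z))\<^sup>2)) \<partial>gauss \<sigma>) \<le> (\<integral>\<^sup>+z. ennreal (exp (R\<^sup>2 * (u \<bullet> z)\<^sup>2)) \<partial>gauss \<sigma>)"
  proof (intro nn_integral_mono ennreal_leI)
    fix z
    have "(r z)\<^sup>2 \<le> R\<^sup>2"
      using r[of z] by (metis abs_le_square_iff abs_of_nonneg R)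
    then have "(r z)\<^sup>2 * (u \<bullet> z)\<^sup>2 \<le> R\<^sup>2 * (u \<bullet> z)\<^sup>2"
      by (rule mult_right_mono) simp
    then show "exp ((u \<bullet> (r z *\<^sub>R z))\<^sup>2) \<le> exp (R\<^sup>2 * (u \<bullet> z)\<^sup>2)"
      by (simp add: power_mult_distrib)
  qed
  also have "\<dots> = ennreal (1 / sqrt (1 - 2 * (R\<^sup>2 * \<sigma>\<^sup>2 * (norm u)\<^sup>2)))"
    using k by (intro nn_integral_gauss_exp_square_inner[OF \<sigma>]) auto
  also have "\<dots> \<le> ennreal (exp (4 * (R\<^sup>2 * \<sigma>\<^sup>2 * (norm u)\<^sup>2)))"
    using k by (intro ennreal_leI inverse_sqrt_one_minus_le_exp) auto
  finally show ?thesis .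
qed

lemma ennreal_average_le:
  assumes "n > 0" and "\<And>i. i < n \<Longrightarrow> a i \<le> E"
  shows "(\<Sum>i<n. a i) / ennreal (real n) \<le> (E :: ennreal)"
proof -
  have "(\<Sum>i<n. a i) \<le> E * ennreal (real n)"
    using sum_mono[of "{..<n}" a "\<lambda>_. E"] assms(2) by (simp add: ennreal_of_nat_eq_real_of_nat mult.commute)
  then have "(\<Sum>i<n. a i) / ennreal (real n) \<le> E * ennreal (real n) / ennreal (real n)"
    by (rule divide_right_mono_ennreal)
  also have "\<dots> = E"
    using assms(1) by (intro ennreal_mult_divide_eq) auto
  finally show ?thesis .
qed

lemma lsmooth_mono:
  assumes "lsmooth L h" and "L \<le> L'"
  shows "lsmooth L' h"
proof -
  obtain G where "\<forall>x. (h has_derivative (\<lambda>v. v \<bullet> G x)) (at x)"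
    and "\<forall>x y. \<bar>h y - h x - (y - x) \<bullet> G x\<bar> \<le> L / 2 * (norm (y - x))\<^sup>2"
    using assms(1) unfolding lsmooth_def by blast
  moreover have "L / 2 * (norm (y - x))\<^sup>2 \<le> L' / 2 * (norm (y - x))\<^sup>2" for x y :: 'a
    using assms(2) by (intro mult_right_mono) auto
  ultimately show ?thesis
    unfolding lsmooth_def by (blast intro: order_trans)
qed

lemma lsmooth_if_quadratic_remainder:
  fixes h :: "'a::euclidean_space \<Rightarrow> real"
  assumes "\<And>x y. \<bar>h y - h x - (y - x) \<bullet> G x\<bar> \<le> L / 2 * (norm (y - x))\<^sup>2"
  shows "lsmooth L h"
  unfolding lsmooth_def using assms has_derivative_of_quadratic_remainder by blast

definition gauss_grad_estimator :: "real \<Rightarrow> ('a::euclidean_space \<Rightarrow> real) \<Rightarrow> 'a \<Rightarrow> 'a \<Rightarrow> 'a" where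
  "gauss_grad_estimator \<sigma> l x z = (1 / \<sigma>\<^sup>2 * (l (x + z) - l x)) *\<^sub>R z"

lemma integral_gauss_grad_estimator:
  fixes l :: "'a::euclidean_space \<Rightarrow> real"
  assumes \<sigma>: "\<sigma> > 0" and [measurable]: "l \<in> borel_measurable borel" and "\<And>y. \<bar>l y\<bar> \<le> M"
  shows "(\<integral>z. gauss_grad_estimator \<sigma> l x z \<partial>gauss \<sigma>) = (\<integral>z. l (x + z) *\<^sub>R z \<partial>gauss \<sigma>) /\<^sub>R \<sigma>\<^sup>2"
proof -
  have int_l: "integrable (gauss \<sigma>) (\<lambda>z. l (x + z) *\<^sub>R z)"
    using \<sigma> assms(3) by (intro integrable_gauss_scaleR) auto
  have "(\<integral>z. gauss_grad_estimator \<sigma> l x z \<partial>gauss \<sigma>) =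
      (\<integral>z. (1 / \<sigma>\<^sup>2) *\<^sub>R (l (x + z) *\<^sub>R z) - (l x / \<sigma>\<^sup>2) *\<^sub>R z \<partial>gauss \<sigma>)"
    unfolding gauss_grad_estimator_def
    by (intro Bochner_Integration.integral_cong) (simp_all add: right_diff_distrib scaleR_diff_left)
  also have "\<dots> = (1 / \<sigma>\<^sup>2) *\<^sub>R (\<integral>z. l (x + z) *\<^sub>R z \<partial>gauss \<sigma>) - (l x / \<sigma>\<^sup>2) *\<^sub>R (\<integral>z. z \<partial>gauss \<sigma>)"
    using int_l integrable_gauss_id[OF \<sigma>]
    by (subst Bochner_Integration.integral_diff) (auto simp del: scaleR_scaleR)
  finally show ?thesis
    by (simp add: integral_gauss_id inverse_eq_divide)
qed

lemma nn_integral_gauss_grad_estimator_exp_square_le: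
  fixes l :: "'a::euclidean_space \<Rightarrow> real"
  assumes \<sigma>: "\<sigma> > 0" and l: "\<And>y. 0 \<le> l y \<and> l y \<le> B" and u: "2 * B * norm u \<le> \<sigma>"
  shows "(\<integral>\<^sup>+z. ennreal (exp ((u \<bullet> gauss_grad_estimator \<sigma> l x z)\<^sup>2)) \<partial>gauss \<sigma>)
    \<le> ennreal (exp ((norm u)\<^sup>2 * (2 * B / \<sigma>)\<^sup>2))"
proof -
  have "\<bar>l (x + z) - l x\<bar> \<le> B" for z
    using l[of "x + z"] l[of x] by (simp add: abs_le_iff)
  then have r: "\<bar>1 / \<sigma>\<^sup>2 * (l (x + z) - l x)\<bar> \<le> B / \<sigma>\<^sup>2" for z
    using \<sigma> by (simp add: abs_mult divide_right_mono)
  have small: "2 * (B / \<sigma>\<^sup>2) * \<sigma> * norm u \<le> 1"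
    using u \<sigma> by (simp add: power2_eq_square)
  have exponent: "4 * ((B / \<sigma>\<^sup>2)\<^sup>2 * \<sigma>\<^sup>2 * (norm u)\<^sup>2) = (norm u)\<^sup>2 * (2 * B / \<sigma>)\<^sup>2"
    using \<sigma> by (simp add: power_divide power_mult_distrib power2_eq_square)
  show ?thesis
    using nn_integral_gauss_exp_square_scaled_le[OF \<sigma> r small]
    unfolding gauss_grad_estimator_def exponent .
qed

lemma average_integral_gauss_grad_estimator:
  fixes l :: "nat \<Rightarrow> 'a::euclidean_space \<Rightarrow> real"
  assumes \<sigma>: "\<sigma> > 0" and "n > 0" and [measurable]: "\<And>i. l i \<in> borel_measurable borel"
    and l_abs: "\<And>i y. \<bar>l i y\<bar> \<le> M"
  shows "(\<Sum>i<n. \<integral>z. gauss_grad_estimator \<sigma> (l i) x z \<partial>gauss \<sigma>) /\<^sub>R real n =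
    (\<integral>z. ((\<Sum>i<n. l i (x + z)) / real n) *\<^sub>R z \<partial>gauss \<sigma>) /\<^sub>R \<sigma>\<^sup>2"
proof -
  have "integrable (gauss \<sigma>) (\<lambda>z. l i (x + z) *\<^sub>R z)" for i
    by (rule integrable_gauss_scaleR[OF \<sigma> _ l_abs]) measurable
  then have "(\<Sum>i<n. \<integral>z. gauss_grad_estimator \<sigma> (l i) x z \<partial>gauss \<sigma>) =
      (\<integral>z. (\<Sum>i<n. l i (x + z)) *\<^sub>R z \<partial>gauss \<sigma>) /\<^sub>R \<sigma>\<^sup>2"
    by (simp add: integral_gauss_grad_estimator[OF \<sigma> _ l_abs] integral_sum scaleR_sum_left
        scaleR_sum_right[symmetric])
  moreover have "(\<Sum>i<n. l i (x + z)) *\<^sub>R z = real n *\<^sub>R (((\<Sum>i<n. l i (x + z)) / real n) *\<^sub>R z)" for z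
    using assms(2) by simp
  ultimately show ?thesis
    using assms(2) by (simp only: integral_scaleR_right) simp
qed

theorem lemma7:
  fixes loss :: "'a::euclidean_space \<Rightarrow> 'b \<Rightarrow> real"
    and as :: "'b list" and B \<sigma> :: real and K :: "'a set"
    and f ftil :: "'a \<Rightarrow> real"
  assumes range: "\<And>x a. 0 \<le> loss x a \<and> loss x a \<le> B"
    and meas: "\<And>a. (\<lambda>x. loss x a) \<in> borel_measurable borel"
    and ne: "as \<noteq> []"
    and sig: "\<sigma> > 0"
    and "compact K"
    and f_def: "\<And>x. f x = (\<Sum>i<length as. loss x (as ! i)) / real (length as)"
    and ftil_def: "\<And>x. ftil x = (\<integral>z. f (x + z) \<partial>gauss \<sigma>)"
  shows "(\<forall>x\<in>K.
            (ftil has_derivative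
               (\<lambda>v. v \<bullet> ((\<Sum>i<length as.
                   \<integral>z. (1 / \<sigma>\<^sup>2 * (loss (x + z) (as ! i) - loss x (as ! i))) *\<^sub>R z \<partial>gauss \<sigma>)
                  /\<^sub>R real (length as)))) (at x)
          \<and> (\<forall>u. 2 * B * norm u \<le> \<sigma> \<longrightarrow>
               (\<Sum>i<length as.
                   \<integral>\<^sup>+z. ennreal (exp ((u \<bullet> ((1 / \<sigma>\<^sup>2 * (loss (x + z) (as ! i) - loss x (as ! i))) *\<^sub>R z))\<^sup>2))
                   \<partial>gauss \<sigma>) / ennreal (real (length as))
               \<le> ennreal (exp ((norm u)\<^sup>2 * (2 * B / \<sigma>)\<^sup>2))))
         \<and> lsmooth (2 * B / \<sigma>\<^sup>2) ftil"
proof -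
  define n where "n = length as"
  define l where "l = (\<lambda>i y. loss y (as ! i))"
  define grad where "grad x = (\<integral>z. f (x + z) *\<^sub>R z \<partial>gauss \<sigma>) /\<^sub>R \<sigma>\<^sup>2" for x
  have n: "n > 0"
    using ne by (simp add: n_def)
  have l_meas [measurable]: "l i \<in> borel_measurable borel" for i
    using meas by (simp add: l_def)
  have l_bounds: "0 \<le> l i y \<and> l i y \<le> B" for i y
    using range by (simp add: l_def)
  have f_avg: "f = (\<lambda>y. (\<Sum>i<n. l i y) / real n)"
    using f_def by (auto simp: n_def l_def)
  have f_bounds: "0 \<le> f y \<and> f y \<le> B" for y
    using n sum_mono[of "{..<n}" "\<lambda>i. l i y" "\<lambda>_. B"] l_bounds
    by (auto simp: f_avg divide_le_eq sum_nonneg mult.commute)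
  have taylor: "\<bar>ftil y - ftil x - (y - x) \<bullet> grad x\<bar> \<le> B / \<sigma>\<^sup>2 / 2 * (norm (y - x))\<^sup>2" for x y
    unfolding ftil_def grad_def using sig f_bounds
    by (intro gauss_smoothing_taylor) (auto simp: f_avg)
  have grad_eq: "(\<Sum>i<n. \<integral>z. gauss_grad_estimator \<sigma> (l i) x z \<partial>gauss \<sigma>) /\<^sub>R real n = grad x" for x
    using l_bounds
    by (simp add: average_integral_gauss_grad_estimator[OF sig n l_meas, where M = B] grad_def f_avg)
  have mgf: "(\<Sum>i<n. \<integral>\<^sup>+z. ennreal (exp ((u \<bullet> gauss_grad_estimator \<sigma> (l i) x z)\<^sup>2)) \<partial>gauss \<sigma>)
      / ennreal (real n) \<le> ennreal (exp ((norm u)\<^sup>2 * (2 * B / \<sigma>)\<^sup>2))" if "2 * B * norm u \<le> \<sigma>" for x u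
    using n nn_integral_gauss_grad_estimator_exp_square_le[OF sig l_bounds that]
    by (rule ennreal_average_le)
  have "lsmooth (B / \<sigma>\<^sup>2) ftil"
    using taylor by (rule lsmooth_if_quadratic_remainder)
  moreover have "B / \<sigma>\<^sup>2 \<le> 2 * B / \<sigma>\<^sup>2"
    using f_bounds[of 0] by (intro divide_right_mono) auto
  ultimately have "lsmooth (2 * B / \<sigma>\<^sup>2) ftil"
    by (rule lsmooth_mono)
  moreover have "(ftil has_derivative (\<lambda>v. v \<bullet> grad x)) (at x)" for x
    using taylor by (rule has_derivative_of_quadratic_remainder)
  moreover have "(1 / \<sigma>\<^sup>2 * (loss (x + z) (as ! i) - loss x (as ! i))) *\<^sub>R z =
      gauss_grad_estimator \<sigma> (l i) x z" for x z i
    by (simp add: l_def gauss_grad_estimator_def)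
  ultimately show ?thesis
    unfolding n_def[symmetric] using mgf grad_eq by simp
qed

end
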